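(* Let $\mathcal{P}_{XY}$ be a probability distribution over $\mathbb{R}^d\times\{\pm1\}$ with marginal distribution $\mathcal{P}_X$ on $\mathbb{R}^d$, let $\mathcal{B}:\mathbb{R}^d\to\mathscr{P}(\mathbb{R}^d)$ be a perturbation set map, and let $\mathcal{F}$ be a hypothesis space of classifiers $f:\mathbb{R}^d\to\{-1,1\}$. Let $S=\{(x_i,y_i)\}_{i=1}^n$ be a set of $n$ i.i.d. samples drawn from $\mathcal{P}_{XY}$. For any function $f\in\mathcal{F}$, with probability at least $1-\delta$ over the random draw of $S$, \[ R^{0/1}_{\mathcal{B}\text{-robust}}(f)\le \mathbb{E}_{x\sim\mathcal{P}_X}\sup_{x'\in\mathcal{B}(x)}\mathbb{I}\big(f(x')\neq f(x)\big)+\hat{R}^{0/1}(f)+Rad_S(\mathcal{F})+3\sqrt{\frac{\log\frac{2}{\delta}}{2n}}. \]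
   Context: The zero-one loss is $l^{0/1}(y',y)=\mathbb{I}[y'\neq y]$. The expected robust classification risk with zero-one loss is $R^{0/1}_{\mathcal{B}\text{-robust}}(f)=\mathbb{E}_{(x,y)\sim\mathcal{P}_{XY}}\sup_{x'\in\mathcal{B}(x)}\mathbb{I}[f(x')\neq y]$. The empirical classification risk with zero-one loss is $\hat{R}^{0/1}(f)=\frac{1}{n}\sum_{i=1}^n\mathbb{I}[f(x_i)\neq y_i]$. The empirical Rademacher complexity is $Rad_S(\mathcal{F})=\frac{1}{n}\mathbb{E}_{\epsilon}\big[\sup_{f\in\mathcal{F}}\sum_{i=1}^n\epsilon_i f(x_i)\big]$, where $\epsilon_1,\dots,\epsilon_n$ are i.i.d. uniform on $\{1,-1\}$. *)

theory Defs
  imports "HOL-Probability.Probability"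
begin

text \<open>Zero-one loss (labels are the reals -1 and 1).\<close>
definition loss01 :: "real \<Rightarrow> real \<Rightarrow> real" where
  "loss01 y' y = (if y' \<noteq> y then 1 else 0)"

text \<open>Expected robust classification risk with zero-one loss:
  E_{(x,y)~P} sup_{x' in B x} I[f x' ~= y]  (sup over the empty set is 0).\<close>
definition robust_risk01 ::
  "(('d \<times> real) measure) \<Rightarrow> ('d \<Rightarrow> 'd set) \<Rightarrow> ('d \<Rightarrow> real) \<Rightarrow> ennreal" where
  "robust_risk01 P B f =
     (\<integral>\<^sup>+ z. (SUP x'\<in>B (fst z). ennreal (loss01 (f x') (snd z))) \<partial>P)"

definition emp_risk01 :: "nat \<Rightarrow> (nat \<Rightarrow> 'd \<times> real) \<Rightarrow> ('d \<Rightarrow> real) \<Rightarrow> real" where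
  "emp_risk01 n S f = (1 / real n) * (\<Sum>i<n. loss01 (f (fst (S i))) (snd (S i)))"

definition rademacher_emp :: "nat \<Rightarrow> (nat \<Rightarrow> 'd \<times> real) \<Rightarrow> ('d \<Rightarrow> real) set \<Rightarrow> real" where
  "rademacher_emp n S F =
     (1 / real n) * ((1 / 2 ^ n) *
        (\<Sum>\<epsilon>\<in>PiE {..<n} (\<lambda>_. {-1, 1::real}).
            Sup ((\<lambda>f. \<Sum>i<n. \<epsilon> i * f (fst (S i))) ` F)))"

end

theory Submission imports Defs begin

text \<open>Since f x' \<noteq> y forces f x' \<noteq> f x or f x \<noteq> y, the robust risk is at most the
  expected instability of f under perturbation plus its standard risk. For the fixed f,
  Hoeffding's inequality makes the standard risk exceed the empirical risk by more than t only
  with probability exp (-2 n t^2), which is at most \<delta>/2 for the chosen t. Finally the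
  Rademacher complexity is nonnegative by the sign symmetry of the Rademacher variables, so
  adding it only weakens the bound.\<close>

lemma loss01_triangle: "loss01 a c \<le> loss01 a b + loss01 b c"
  by (simp add: loss01_def)

lemma SUP_loss01_le:
  "(SUP x'\<in>X. ennreal (loss01 (g x') y)) \<le> (SUP x'\<in>X. ennreal (loss01 (g x') c)) + ennreal (loss01 c y)"
proof (rule SUP_least)
  fix x' assume "x' \<in> X"
  have "ennreal (loss01 (g x') y) \<le> ennreal (loss01 (g x') c + loss01 c y)"
    by (intro ennreal_leI loss01_triangle)
  also have "\<dots> = ennreal (loss01 (g x') c) + ennreal (loss01 c y)"
    by (intro ennreal_plus) (simp_all add: loss01_def)
  also have "\<dots> \<le> (SUP x'\<in>X. ennreal (loss01 (g x') c)) + ennreal (loss01 c y)"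
    using \<open>x' \<in> X\<close> by (intro add_right_mono SUP_upper)
  finally show "ennreal (loss01 (g x') y) \<le> (SUP x'\<in>X. ennreal (loss01 (g x') c)) + ennreal (loss01 c y)" .
qed

lemma borel_measurable_loss01:
  fixes f :: "'a::topological_space \<Rightarrow> real"
  assumes "f \<in> borel_measurable borel"
  shows "(\<lambda>z::'a \<times> real. loss01 (f (fst z)) (snd z)) \<in> borel_measurable borel"
proof -
  have "(\<lambda>z::'a \<times> real. f (fst z)) \<in> borel_measurable borel"
    by (rule measurable_compose[OF _ assms]) (intro borel_measurable_continuous_onI continuous_intros)
  moreover have "(snd :: 'a \<times> real \<Rightarrow> real) \<in> borel_measurable borel"
    by (intro borel_measurable_continuous_onI continuous_intros)
  ultimately have "{z \<in> space borel. f (fst z) = snd z} \<in> sets (borel :: ('a \<times> real) measure)"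
    by (rule borel_measurable_eq)
  moreover have "(\<lambda>z::'a \<times> real. loss01 (f (fst z)) (snd z))
      = indicator (space borel - {z \<in> space borel. f (fst z) = snd z})"
    by (auto simp: loss01_def fun_eq_iff indicator_def)
  ultimately show ?thesis
    by (simp del: space_borel)
qed

lemma robust_risk01_le:
  fixes P :: "('a::topological_space \<times> real) measure" and f :: "'a \<Rightarrow> real"
  assumes P: "prob_space P" and sets_P: "sets P = sets borel"
    and f: "f \<in> borel_measurable borel"
    and G_meas: "(\<lambda>x. SUP x'\<in>B x. ennreal (loss01 (f x') (f x))) \<in> borel_measurable borel"
  shows "robust_risk01 P B f
    \<le> (\<integral>\<^sup>+ x. (SUP x'\<in>B x. ennreal (loss01 (f x') (f x))) \<partial>distr P borel fst)
       + ennreal (\<integral>z. loss01 (f (fst z)) (snd z) \<partial>P)"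
proof -
  interpret P: prob_space P by (rule P)
  define G where "G x = (SUP x'\<in>B x. ennreal (loss01 (f x') (f x)))" for x
  define L where "L z = loss01 (f (fst z)) (snd z)" for z
  have L_meas: "L \<in> borel_measurable P"
    unfolding L_def measurable_cong_sets[OF sets_P refl] using f by (rule borel_measurable_loss01)
  have fst_meas: "fst \<in> measurable P borel"
    unfolding measurable_cong_sets[OF sets_P refl]
    by (intro borel_measurable_continuous_onI continuous_intros)
  have L_01: "L z \<in> {0..1}" for z
    by (simp add: L_def loss01_def)
  have "robust_risk01 P B f \<le> (\<integral>\<^sup>+ z. (G (fst z) + ennreal (L z)) \<partial>P)"
    unfolding robust_risk01_def G_def L_def by (intro nn_integral_mono SUP_loss01_le)
  also have "\<dots> = (\<integral>\<^sup>+ z. G (fst z) \<partial>P) + (\<integral>\<^sup>+ z. ennreal (L z) \<partial>P)"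
    using L_meas fst_meas G_meas by (intro nn_integral_add) (auto simp: G_def)
  also have "(\<integral>\<^sup>+ z. G (fst z) \<partial>P) = (\<integral>\<^sup>+ x. G x \<partial>distr P borel fst)"
    using fst_meas G_meas by (intro nn_integral_distr[symmetric]) (auto simp: G_def)
  also have "(\<integral>\<^sup>+ z. ennreal (L z) \<partial>P) = ennreal (\<integral>z. L z \<partial>P)"
    using L_meas L_01 by (intro nn_integral_eq_integral P.integrable_const_bound[where B = 1]) auto
  finally show ?thesis
    unfolding G_def L_def .
qed

lemma indep_vars_PiM_components:
  assumes M: "\<And>i. i \<in> I \<Longrightarrow> prob_space (M i)" and "I \<noteq> {}"
  shows "prob_space.indep_vars (PiM I M) M (\<lambda>i \<omega>. \<omega> i) I"
proof -
  interpret prob_space "PiM I M" by (intro prob_space_PiM M)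
  have "distr (PiM I M) (PiM I M) (\<lambda>\<omega>. \<lambda>i\<in>I. \<omega> i) = distr (PiM I M) (PiM I M) (\<lambda>\<omega>. \<omega>)"
    by (intro distr_cong) (auto simp: space_PiM PiE_def extensional_restrict)
  also have "\<dots> = PiM I (\<lambda>i. distr (PiM I M) (M i) (\<lambda>\<omega>. \<omega> i))"
    using M by (simp add: distr_PiM_component cong: PiM_cong)
  finally show ?thesis
    using \<open>I \<noteq> {}\<close> by (subst indep_vars_iff_distr_eq_PiM') auto
qed

lemma iid_mean_lower_deviation:
  fixes L :: "'a \<Rightarrow> real"
  assumes P: "prob_space P" and L_meas: "L \<in> borel_measurable P"
    and L_bounded: "AE z in P. L z \<in> {a..b}" and "a < b" and "n > 0" and "t \<ge> 0"
  defines "M \<equiv> PiM {..<n} (\<lambda>_. P)"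
  defines "A \<equiv> {S \<in> space M. (\<integral>z. L z \<partial>P) - t < (\<Sum>i<n. L (S i)) / real n}"
  shows "A \<in> sets M" and "measure M A \<ge> 1 - exp (-2 * real n * t\<^sup>2 / (b - a)\<^sup>2)"
proof -
  interpret P: prob_space P by (rule P)
  interpret M: prob_space M unfolding M_def by (intro prob_space_PiM P)
  define X where "X i S = L (S i)" for i :: nat and S
  have component: "distr M P (\<lambda>S. S i) = P" if "i < n" for i
    unfolding M_def using that by (intro distr_PiM_component P) auto
  have X_meas [measurable]: "X i \<in> borel_measurable M" if "i \<in> {..<n}" for i
    unfolding X_def M_def using that
    by (intro measurable_compose[OF _ L_meas] measurable_component_singleton) auto
  have "M.indep_vars (\<lambda>_. borel) X {..<n}"
  proof -
    have "M.indep_vars (\<lambda>_. P) (\<lambda>i S. S i) {..<n}"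
      unfolding M_def using indep_vars_PiM_components[of "{..<n}" "\<lambda>_. P"] P \<open>n > 0\<close> by auto
    from M.indep_vars_compose2[OF this, of "\<lambda>_. L"] L_meas show ?thesis
      unfolding X_def by auto
  qed
  moreover have "distr M borel (X i) = distr P borel L" if "i < n" for i
  proof -
    have "distr M borel (X i) = distr (distr M P (\<lambda>S. S i)) borel L"
      unfolding X_def M_def using that L_meas by (subst distr_distr) (auto simp: comp_def)
    then show ?thesis
      using component[OF that] by simp
  qed
  moreover have "AE S in M. L (S 0) \<in> {a..b}"
    unfolding M_def using P L_bounded \<open>n > 0\<close> by (intro AE_PiM_component) auto
  moreover have component_meas: "(\<lambda>S. S 0) \<in> measurable M P"
    unfolding M_def using \<open>n > 0\<close> by (intro measurable_component_singleton) auto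
  ultimately interpret Hoeffding_ineq_iid M "{..<n}" X "\<lambda>S. L (S 0)" a b "M.expectation (\<lambda>S. L (S 0))"
    using \<open>n > 0\<close> L_meas by unfold_locales (auto simp: X_def[abs_def])
  have mean: "M.expectation (\<lambda>S. L (S 0)) = (\<integral>z. L z \<partial>P)"
    using integral_distr[OF component_meas L_meas] component[OF \<open>n > 0\<close>] by simp
  have "space M - A
      = {S \<in> space M. (\<Sum>i\<in>{..<n}. X i S) / real (card {..<n}) \<le> M.expectation (\<lambda>S. L (S 0)) - t}"
    unfolding mean by (auto simp: A_def X_def)
  moreover have "{..<n} \<noteq> {}"
    using \<open>n > 0\<close> by auto
  ultimately have "M.prob (space M - A) \<le> exp (-2 * real n * t\<^sup>2 / (b - a)\<^sup>2)"
    using Hoeffding_ineq_le'[OF \<open>t \<ge> 0\<close> \<open>a < b\<close>] by simp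
  moreover show A_sets: "A \<in> sets M"
    unfolding A_def X_def[symmetric] by measurable
  ultimately show "measure M A \<ge> 1 - exp (-2 * real n * t\<^sup>2 / (b - a)\<^sup>2)"
    using M.prob_compl[of "space M - A"] sets.sets_into_space[OF A_sets]
    by (simp add: Diff_Diff_Int Int_absorb1)
qed

lemma exp_Hoeffding_confidence_le:
  assumes "0 < \<delta>" and "\<delta> < 1" and "n > 0" and "1 \<le> c"
  shows "exp (-2 * real n * (c * sqrt (ln (2 / \<delta>) / (2 * real n)))\<^sup>2) \<le> \<delta> / 2"
proof -
  have ln_pos: "ln (2 / \<delta>) > 0"
    using assms by (simp add: ln_gt_zero_iff field_simps)
  have "-2 * real n * (c * sqrt (ln (2 / \<delta>) / (2 * real n)))\<^sup>2 = - c\<^sup>2 * ln (2 / \<delta>)"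
    using ln_pos \<open>n > 0\<close> by (simp add: power_mult_distrib)
  also have "\<dots> \<le> - ln (2 / \<delta>)"
    using ln_pos \<open>1 \<le> c\<close> by simp
  finally have "exp (-2 * real n * (c * sqrt (ln (2 / \<delta>) / (2 * real n)))\<^sup>2) \<le> exp (- ln (2 / \<delta>))"
    by simp
  also have "\<dots> = \<delta> / 2"
    using \<open>0 < \<delta>\<close> by (simp add: exp_minus)
  finally show ?thesis .
qed

lemma iid_mean_confidence:
  fixes L :: "'a \<Rightarrow> real"
  assumes P: "prob_space P" and L_meas: "L \<in> borel_measurable P"
    and L_01: "AE z in P. L z \<in> {0..1}" and n: "n > 0" and \<delta>: "0 < \<delta>" "\<delta> < 1" and "1 \<le> c"
  defines "M \<equiv> PiM {..<n} (\<lambda>_. P)"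
  defines "A \<equiv> {S \<in> space M. (\<integral>z. L z \<partial>P) - c * sqrt (ln (2 / \<delta>) / (2 * real n))
                               < (\<Sum>i<n. L (S i)) / real n}"
  shows "A \<in> sets M" and "measure M A \<ge> 1 - \<delta> / 2"
proof -
  have "c * sqrt (ln (2 / \<delta>) / (2 * real n)) \<ge> 0"
    using \<delta> \<open>1 \<le> c\<close> by simp
  note deviation = iid_mean_lower_deviation[OF P L_meas L_01 zero_less_one n this]
  show "A \<in> sets M"
    using deviation(1) unfolding A_def M_def .
  show "measure M A \<ge> 1 - \<delta> / 2"
    using deviation(2) exp_Hoeffding_confidence_le[OF \<delta> n \<open>1 \<le> c\<close>] unfolding A_def M_def
    by simp
qed

lemma sum_Rademacher_signs_linear:
  fixes c :: "nat \<Rightarrow> real"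
  shows "(\<Sum>\<epsilon>\<in>PiE {..<n} (\<lambda>_. {-1, 1}). \<Sum>i<n. \<epsilon> i * c i) = 0"
proof -
  define E where "E = PiE {..<n} (\<lambda>_. {-1, 1::real})"
  define neg where "neg \<epsilon> = restrict (\<lambda>i. - \<epsilon> i) {..<n}" for \<epsilon> :: "nat \<Rightarrow> real"
  have neg_E: "neg \<epsilon> \<in> E" if "\<epsilon> \<in> E" for \<epsilon>
    using that by (auto simp: E_def neg_def PiE_iff)
  have neg_neg: "neg (neg \<epsilon>) = \<epsilon>" if "\<epsilon> \<in> E" for \<epsilon>
    using that by (auto simp: E_def neg_def PiE_iff extensional_def)
  have "(\<Sum>\<epsilon>\<in>E. \<Sum>i<n. \<epsilon> i * c i) = (\<Sum>\<epsilon>\<in>E. \<Sum>i<n. neg \<epsilon> i * c i)"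
    by (rule sum.reindex_bij_witness[of _ neg neg]) (use neg_E neg_neg in auto)
  also have "\<dots> = - (\<Sum>\<epsilon>\<in>E. \<Sum>i<n. \<epsilon> i * c i)"
    by (simp add: neg_def sum_negf)
  finally show ?thesis
    by (simp add: E_def)
qed

lemma rademacher_emp_nonneg:
  assumes "f \<in> F" and bounded: "\<And>g x. g \<in> F \<Longrightarrow> \<bar>g x\<bar> \<le> C"
  shows "0 \<le> rademacher_emp n S F"
proof -
  define E where "E = PiE {..<n} (\<lambda>_. {-1, 1::real})"
  define corr where "corr \<epsilon> g = (\<Sum>i<n. \<epsilon> i * g (fst (S i)))" for \<epsilon> :: "nat \<Rightarrow> real" and g
  have "corr \<epsilon> f \<le> Sup (corr \<epsilon> ` F)" if "\<epsilon> \<in> E" for \<epsilon>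
  proof (rule cSup_upper)
    have "corr \<epsilon> g \<le> real n * C" if "g \<in> F" for g
    proof -
      have "corr \<epsilon> g \<le> (\<Sum>i<n. C)"
        unfolding corr_def
      proof (rule sum_mono)
        fix i assume "i \<in> {..<n}"
        then have "\<epsilon> i \<in> {-1, 1}"
          using \<open>\<epsilon> \<in> E\<close> by (auto simp: E_def PiE_iff)
        then have "\<bar>\<epsilon> i\<bar> = 1"
          by auto
        then show "\<epsilon> i * g (fst (S i)) \<le> C"
          using bounded[OF \<open>g \<in> F\<close>, of "fst (S i)"] abs_mult[of "\<epsilon> i" "g (fst (S i))"]
            abs_ge_self[of "\<epsilon> i * g (fst (S i))"] by simp
      qed
      then show ?thesis by simp
    qed
    then show "bdd_above (corr \<epsilon> ` F)"
      by (intro bdd_aboveI[where M = "real n * C"]) auto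
  qed (use \<open>f \<in> F\<close> in auto)
  then have "(\<Sum>\<epsilon>\<in>E. corr \<epsilon> f) \<le> (\<Sum>\<epsilon>\<in>E. Sup (corr \<epsilon> ` F))"
    by (rule sum_mono)
  moreover have "(\<Sum>\<epsilon>\<in>E. corr \<epsilon> f) = 0"
    unfolding E_def corr_def by (rule sum_Rademacher_signs_linear)
  ultimately show ?thesis
    unfolding rademacher_emp_def E_def corr_def by simp
qed

theorem theorem1:
  fixes P :: "((real^('d::finite)) \<times> real) measure"
    and B :: "(real^'d) \<Rightarrow> (real^'d) set"
    and F :: "((real^'d) \<Rightarrow> real) set"
    and f :: "(real^'d) \<Rightarrow> real"
    and n :: nat and \<delta> :: real
  assumes "prob_space P"
    and "sets P = sets borel"
    and "AE z in P. snd z \<in> {-1, 1}"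
    and "\<forall>g\<in>F. \<forall>x. g x \<in> {-1, 1}"
    and "f \<in> F"
    and "f \<in> borel_measurable borel"
    and "(\<lambda>z. (SUP x'\<in>B (fst z). ennreal (loss01 (f x') (snd z)))) \<in> borel_measurable borel"
    and "(\<lambda>x. (SUP x'\<in>B x. ennreal (loss01 (f x') (f x)))) \<in> borel_measurable borel"
    and "n > 0"
    and "0 < \<delta>" and "\<delta> < 1"
  shows "\<exists>A \<in> sets (PiM {..<n} (\<lambda>_. P)).
           measure (PiM {..<n} (\<lambda>_. P)) A \<ge> 1 - \<delta> \<and>
           (\<forall>S\<in>A. robust_risk01 P B f \<le>
               (\<integral>\<^sup>+ x. (SUP x'\<in>B x. ennreal (loss01 (f x') (f x))) \<partial>(distr P borel fst))
               + ennreal (emp_risk01 n S f + rademacher_emp n S F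
                          + 3 * sqrt (ln (2 / \<delta>) / (2 * real n))))"
proof -
  note P = assms(1) and sets_P = assms(2) and F = assms(4,5) and f = assms(6)
    and instability_meas = assms(8) and n = assms(9) and \<delta> = assms(10,11)
  define L where "L z = loss01 (f (fst z)) (snd z)" for z
  define A where "A = {S \<in> space (PiM {..<n} (\<lambda>_. P)).
    (\<integral>z. L z \<partial>P) - 3 * sqrt (ln (2 / \<delta>) / (2 * real n)) < (\<Sum>i<n. L (S i)) / real n}"
  have L_meas: "L \<in> borel_measurable P"
    unfolding L_def measurable_cong_sets[OF sets_P refl] using f by (rule borel_measurable_loss01)
  have L_01: "AE z in P. L z \<in> {0..1}"
    by (simp add: L_def loss01_def)
  have "(1::real) \<le> 3"
    by simp
  note confidence = iid_mean_confidence[OF P L_meas L_01 n \<delta> this, folded A_def]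
  have "\<bar>g x\<bar> \<le> 1" if "g \<in> F" for g x
    using F(1) that by (metis abs_minus_cancel abs_one empty_iff insert_iff order_refl)
  then have rademacher_nonneg: "0 \<le> rademacher_emp n S F" for S
    by (rule rademacher_emp_nonneg[OF F(2)])
  have "robust_risk01 P B f
      \<le> (\<integral>\<^sup>+ x. (SUP x'\<in>B x. ennreal (loss01 (f x') (f x))) \<partial>distr P borel fst)
         + ennreal (emp_risk01 n S f + rademacher_emp n S F + 3 * sqrt (ln (2 / \<delta>) / (2 * real n)))"
    if "S \<in> A" for S
  proof -
    have "(\<integral>z. L z \<partial>P)
        \<le> emp_risk01 n S f + rademacher_emp n S F + 3 * sqrt (ln (2 / \<delta>) / (2 * real n))"
      using that rademacher_nonneg[of S] by (auto simp: A_def emp_risk01_def L_def)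
    then show ?thesis
      using robust_risk01_le[OF P sets_P f instability_meas] unfolding L_def
      by (meson add_left_mono ennreal_leI order_trans)
  qed
  moreover have "measure (PiM {..<n} (\<lambda>_. P)) A \<ge> 1 - \<delta>"
    using confidence(2) \<delta> by linarith
  ultimately show ?thesis
    using confidence(1) by blast
qed

end
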